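(* Consider the problem and algorithm AC2CD described in the context (including the additional requirement on $A^{k,i}$). For every stationary point $x^*$ and every inner iteration $(k,i)$, \[ g^{k,i}\bigl(x^*_{p^k_i}-z^{k,i+1}_{p^k_i}\bigr)\le \max\Bigl\{\frac1{A_l},\frac{L^{\max}}{2\delta(1-\gamma)}\Bigr\}\,\bigl|z^{k,i+1}_{p^k_i}-z^{k,i}_{p^k_i}\bigr|\,\bigl|x^*_{p^k_i}-z^{k,i+1}_{p^k_i}\bigr|. \]
   Context: Problem: minimize $f(x)$ subject to $e^T x = b$ and $l_i \le x_i \le u_i$ ($i=1,\dots,n$), where $n\ge 2$, $e$ is the all-ones vector, $b\in\mathbb{R}$, $l_i\in\mathbb{R}\cup\{-\infty\}$, $u_i\in\mathbb{R}\cup\{+\infty\}$, $l_i<u_i$, and $f:\mathbb{R}^n\to\mathbb{R}$ is continuously differentiable with $\nabla f$ Lipschitz continuous on $\mathbb{R}^n$. $\mathcal F$ is the feasible set, $e_i$ the $i$th unit vector. For $i\ne j$, $L_{i,j}>0$ are fixed constants such that for every $x\in\mathbb{R}^n$ and $s,t\in\mathbb{R}$, $|\nabla f(x+s(e_i-e_j))^T(e_i-e_j)-\nabla f(x+t(e_i-e_j))^T(e_i-e_j)|\le L_{i,j}|s-t|$; $L_{i,i}=0$; $L^{\max}=\max_{i,j}L_{i,j}$. For $x\in\mathcal F$, $D_h(x)=\min\{x_h-l_h,u_h-x_h\}$. A point $x^*\in\mathcal F$ is stationary iff there is $\lambda^*\in\mathbb{R}$ with $\nabla_i f(x^* )\ge\lambda^*$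 if $x^*_i=l_i$, $=\lambda^*$ if $l_i<x^*_i<u_i$, $\le\lambda^*$ if $x^*_i=u_i$. Algorithm AC2CD with parameters $\tau\in(0,1]$, $\gamma,\delta\in(0,1)$, $0<A_l\le A_u<\infty$ and starting point $x^0\in\mathcal F$: for $k=0,1,2,\dots$: let $D^k=\max_h D_h(x^k)$; choose $j(k)$ with $D_{j(k)}(x^k)\ge\tau D^k$; choose a permutation $(p^k_1,\dots,p^k_n)$ of $\{1,\dots,n\}$; set $z^{k,1}=x^k$; for $i=1,\dots,n$ (inner iteration $(k,i)$): $g^{k,i}=\nabla_{j(k)}f(z^{k,i})-\nabla_{p^k_i}f(z^{k,i})$, $d^{k,i}=g^{k,i}(e_{p^k_i}-e_{j(k)})$; $\bar\alpha^{k,i}=\min\{u_{p^k_i}-z^{k,i}_{p^k_i},z^{k,i}_{j(k)}-l_{j(k)}\}/g^{k,i}$ if $g^{k,i}>0$, $=\min\{z^{k,i}_{p^k_i}-l_{p^k_i},u_{j(k)}-z^{k,i}_{j(k)}\}/|g^{k,i}|$ if $g^{k,i}<0$, $=0$ if $g^{k,i}=0$; choose $A^{k,i}\in[A_l,A_u]$, set $\Delta^{k,i}=\min\{\bar\alpha^{k,i},A^{k,i}\}$; starting from $\alpha=\Delta^{k,i}$, while $f(z^{k,i}+\alpha d^{k,i})>f(z^{k,i})+\gamma\alpha\nabla f(z^{k,i})^Td^{k,i}$ replace $\alpha$ by $\delta\alpha$; $\alpha^{k,i}$ is the final $\alpha$ and $z^{k,i+1}=z^{k,i}+\alpha^{k,i}d^{k,i}$.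 Then $x^{k+1}=z^{k,n+1}$. Additional requirement: the values $A^{k,i}\in[A_l,A_u]$ are chosen so that $l_{j(k)}<z^{k,i}_{j(k)}<u_{j(k)}$ for all $k\ge0$ and $i=1,\dots,n+1$. Standing assumptions: $\mathcal L_0=\{x\in\mathcal F: f(x)\le f(x^0)\}$ is nonempty and compact, and every $x\in\mathcal L_0$ has some index $i$ with $l_i<x_i<u_i$. *)

theory Defs
  imports "HOL-Analysis.Analysis"
begin

text \<open>Vectors of R^n are modelled as real^'n (index type 'n, n = CARD('n)).
  Bounds are extended reals: l i may be -\<infinity>, u i may be +\<infinity>.\<close>

definition feasible :: "('n::finite \<Rightarrow> ereal) \<Rightarrow> ('n \<Rightarrow> ereal) \<Rightarrow> real \<Rightarrow> real^'n \<Rightarrow> bool" where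
  "feasible l u b x \<longleftrightarrow> (\<Sum>i\<in>UNIV. x $ i) = b \<and> (\<forall>i. l i \<le> ereal (x $ i) \<and> ereal (x $ i) \<le> u i)"

definition Dh :: "('n::finite \<Rightarrow> ereal) \<Rightarrow> ('n \<Rightarrow> ereal) \<Rightarrow> real^'n \<Rightarrow> 'n \<Rightarrow> ereal" where
  "Dh l u x h = min (ereal (x $ h) - l h) (u h - ereal (x $ h))"

definition stationary :: "('n::finite \<Rightarrow> ereal) \<Rightarrow> ('n \<Rightarrow> ereal) \<Rightarrow> real \<Rightarrow> (real^'n \<Rightarrow> real^'n) \<Rightarrow> real^'n \<Rightarrow> bool" where
  "stationary l u b grad xs \<longleftrightarrow> feasible l u b xs \<and>
     (\<exists>lam::real. \<forall>i.
        (ereal (xs $ i) = l i \<longrightarrow> grad xs $ i \<ge> lam) \<and>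
        (l i < ereal (xs $ i) \<and> ereal (xs $ i) < u i \<longrightarrow> grad xs $ i = lam) \<and>
        (ereal (xs $ i) = u i \<longrightarrow> grad xs $ i \<le> lam))"

text \<open>Maximal feasible stepsize alpha-bar along d = g (e_p - e_j) from z.\<close>
definition alpha_bar :: "('n::finite \<Rightarrow> ereal) \<Rightarrow> ('n \<Rightarrow> ereal) \<Rightarrow> real^'n \<Rightarrow> 'n \<Rightarrow> 'n \<Rightarrow> real \<Rightarrow> ereal" where
  "alpha_bar l u z p j g =
     (if g > 0 then min (u p - ereal (z $ p)) (ereal (z $ j) - l j) / ereal g
      else if g < 0 then min (ereal (z $ p) - l p) (u j - ereal (z $ j)) / ereal \<bar>g\<bar>
      else 0)"

end

theory Submission
  imports Defs
begin

text \<open>Write z, z' for the inner iterates before and after the step along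
  \<open>g (e\<^sub>p - e\<^sub>j)\<close> and \<alpha> for its length, so that \<open>z'\<^sub>p - z\<^sub>p = \<alpha> g\<close>. If
  \<open>g (x*\<^sub>p - z'\<^sub>p) \<le> 0\<close> there is nothing to prove. Otherwise \<open>x*\<^sub>p\<close> lies strictly
  beyond \<open>z'\<^sub>p\<close> in the direction in which coordinate p moved, so feasibility of x*
  (the only property of x* that is used) shows that \<alpha> stays strictly below the
  maximal feasible step. Hence either the first trial step \<open>\<Delta> = A \<ge> A\<^sub>l\<close> was
  accepted, or the rejected trial step \<open>\<alpha>/\<delta>\<close> violates the quadratic upper bound
  given by the directional Lipschitz constant \<open>L\<^sub>p\<^sub>j\<close>, which forces
  \<open>\<alpha> > 2\<delta>(1-\<gamma>)/L\<^sub>p\<^sub>j\<close>. In both cases \<open>max (1/A\<^sub>l) (L\<^sub>m\<^sub>a\<^sub>x/(2\<delta>(1-\<gamma>))) \<alpha> \<ge> 1\<close>.\<close>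

lemma has_real_derivative_along_line:
  fixes f :: "'a::real_inner \<Rightarrow> real"
  assumes grad: "\<And>y. (f has_derivative (\<lambda>h. grad y \<bullet> h)) (at y)"
  shows "((\<lambda>r. f (z + r *\<^sub>R d)) has_real_derivative (grad (z + r *\<^sub>R d) \<bullet> d)) (at r)"
proof -
  have "((\<lambda>r. z + r *\<^sub>R d) has_derivative (\<lambda>h. h *\<^sub>R d)) (at r)"
    by (auto intro!: derivative_eq_intros)
  from has_derivative_compose[OF this grad]
  show ?thesis
    by (simp add: has_field_derivative_def mult.commute[of _ "grad _ \<bullet> d"])
qed

lemma descent_along_line:
  fixes f :: "'a::real_inner \<Rightarrow> real"
  assumes grad: "\<And>y. (f has_derivative (\<lambda>h. grad y \<bullet> h)) (at y)"
    and lip: "\<And>r. 0 \<le> r \<Longrightarrow> grad (z + r *\<^sub>R d) \<bullet> d - grad z \<bullet> d \<le> K * r"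
    and t: "0 \<le> t"
  shows "f (z + t *\<^sub>R d) \<le> f z + t * (grad z \<bullet> d) + K / 2 * t\<^sup>2"
proof -
  define \<psi> where "\<psi> r = f (z + r *\<^sub>R d) - r * (grad z \<bullet> d) - K / 2 * r\<^sup>2" for r
  have "\<psi> t \<le> \<psi> 0"
  proof (rule DERIV_nonpos_imp_nonincreasing[OF t])
    fix r :: real
    assume "0 \<le> r" "r \<le> t"
    have "(\<psi> has_real_derivative (grad (z + r *\<^sub>R d) \<bullet> d - grad z \<bullet> d - K * r)) (at r)"
      unfolding \<psi>_def by (auto intro!: derivative_eq_intros has_real_derivative_along_line grad)
    with lip[OF \<open>0 \<le> r\<close>] show "\<exists>y. (\<psi> has_real_derivative y) (at r) \<and> y \<le> 0"
      by force
  qed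
  then show ?thesis unfolding \<psi>_def by simp
qed

lemma armijo_failure_imp_large_step:
  fixes f :: "'a::real_inner \<Rightarrow> real"
  assumes grad: "\<And>y. (f has_derivative (\<lambda>h. grad y \<bullet> h)) (at y)"
    and lip: "\<And>r. 0 \<le> r \<Longrightarrow> grad (z + r *\<^sub>R d) \<bullet> d - grad z \<bullet> d \<le> K * r"
    and t: "0 \<le> t"
    and fails: "f z + \<gamma> * t * (grad z \<bullet> d) < f (z + t *\<^sub>R d)"
  shows "2 * (1 - \<gamma>) * - (grad z \<bullet> d) < K * t"
proof -
  from fails descent_along_line[OF grad lip t]
  have "t * ((1 - \<gamma>) * - (grad z \<bullet> d)) < t * (K * t / 2)"
    by (simp add: algebra_simps power2_eq_square)
  moreover from this t have "0 < t" by (cases "t = 0") auto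
  ultimately have "(1 - \<gamma>) * - (grad z \<bullet> d) < K * t / 2"
    by (simp only: mult_less_cancel_left_pos)
  then show ?thesis by (simp add: algebra_simps)
qed

lemma backtracking_step_lower_bound:
  fixes f :: "'a::real_inner \<Rightarrow> real"
  assumes grad: "\<And>y. (f has_derivative (\<lambda>h. grad y \<bullet> h)) (at y)"
    and lip: "\<And>s t. \<bar>grad (z + s *\<^sub>R v) \<bullet> v - grad (z + t *\<^sub>R v) \<bullet> v\<bar> \<le> L * \<bar>s - t\<bar>"
    and slope: "grad z \<bullet> v = - G" and G: "G \<noteq> 0"
    and \<delta>: "0 < \<delta>" and \<Delta>: "0 < \<Delta>"
    and rejected: "\<And>m'. m' < m \<Longrightarrow> \<not> f (z + (\<delta> ^ m' * \<Delta>) *\<^sub>R (G *\<^sub>R v))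
                     \<le> f z + \<gamma> * (\<delta> ^ m' * \<Delta>) * (grad z \<bullet> (G *\<^sub>R v))"
  shows "m = 0 \<or> 2 * \<delta> * (1 - \<gamma>) < L * (\<delta> ^ m * \<Delta>)"
proof (cases m)
  case (Suc m')
  define t where "t = \<delta> ^ m' * \<Delta>"
  have slope_d: "grad z \<bullet> (G *\<^sub>R v) = - G\<^sup>2"
    using slope by (simp add: power2_eq_square)
  have lip_d: "grad (z + r *\<^sub>R (G *\<^sub>R v)) \<bullet> (G *\<^sub>R v) - grad z \<bullet> (G *\<^sub>R v) \<le> (L * G\<^sup>2) * r"
    if "0 \<le> r" for r
  proof -
    let ?D = "grad (z + (r * G) *\<^sub>R v) \<bullet> v - grad (z + 0 *\<^sub>R v) \<bullet> v"
    have "grad (z + r *\<^sub>R (G *\<^sub>R v)) \<bullet> (G *\<^sub>R v) - grad z \<bullet> (G *\<^sub>R v) = G * ?D"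
      by (simp add: right_diff_distrib)
    also have "\<dots> \<le> \<bar>G\<bar> * \<bar>?D\<bar>"
      by (metis abs_ge_self abs_mult)
    also have "\<dots> \<le> \<bar>G\<bar> * (L * \<bar>r * G - 0\<bar>)"
      by (rule mult_left_mono[OF lip]) simp
    also have "\<dots> = (L * G\<^sup>2) * r"
      using that by (simp add: abs_mult power2_eq_square)
    finally show ?thesis .
  qed
  have "2 * (1 - \<gamma>) * - (grad z \<bullet> (G *\<^sub>R v)) < (L * G\<^sup>2) * t"
  proof (rule armijo_failure_imp_large_step[OF grad lip_d])
    show "0 \<le> t"
      using \<delta> \<Delta> by (simp add: t_def)
    show "f z + \<gamma> * t * (grad z \<bullet> (G *\<^sub>R v)) < f (z + t *\<^sub>R (G *\<^sub>R v))"
      using rejected[of m'] Suc by (simp add: t_def)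
  qed
  then have "(2 * (1 - \<gamma>)) * G\<^sup>2 < (L * t) * G\<^sup>2"
    unfolding slope_d by (simp add: ac_simps)
  then have "2 * (1 - \<gamma>) < L * t"
    using G by simp
  then have "\<delta> * (2 * (1 - \<gamma>)) < \<delta> * (L * t)"
    using \<delta> by simp
  then show ?thesis
    using Suc by (simp add: t_def ac_simps)
qed simp

lemma alpha_bar_gt_step:
  fixes Z Z' xs :: "real^'n::finite"
  assumes PJ: "P \<noteq> J" and G: "G \<noteq> 0"
    and step: "Z' = Z + (\<alpha> * G) *\<^sub>R (axis P 1 - axis J 1)"
    and J: "l J < ereal (Z' $ J)" "ereal (Z' $ J) < u J"
    and P: "l P \<le> ereal (xs $ P)" "ereal (xs $ P) \<le> u P"
    and ahead: "0 < G * (xs $ P - Z' $ P)"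
  shows "ereal \<alpha> < alpha_bar l u Z P J G"
proof -
  have Z'P: "Z' $ P = Z $ P + \<alpha> * G" and Z'J: "Z' $ J = Z $ J - \<alpha> * G"
    using PJ by (simp_all add: step axis_def)
  show ?thesis
  proof (cases "G > 0")
    case True
    have "ereal (\<alpha> * G) < u P - ereal (Z $ P)"
      using ahead P(2) True by (cases "u P") (auto simp: Z'P zero_less_mult_iff)
    moreover have "ereal (\<alpha> * G) < ereal (Z $ J) - l J"
      using J(1) by (cases "l J") (auto simp: Z'J)
    ultimately show ?thesis
      using True by (simp add: alpha_bar_def ereal_less_divide_pos mult.commute)
  next
    case False
    with G have neg: "G < 0" by simp
    have "ereal (\<alpha> * \<bar>G\<bar>) < ereal (Z $ P) - l P"
      using ahead P(1) neg by (cases "l P") (auto simp: Z'P zero_less_mult_iff mult_less_0_iff)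
    moreover have "ereal (\<alpha> * \<bar>G\<bar>) < u J - ereal (Z $ J)"
      using J(2) neg by (cases "u J") (auto simp: Z'J)
    ultimately show ?thesis
      using neg by (simp add: alpha_bar_def ereal_less_divide_pos mult.commute)
  qed
qed

lemma capped_step_pos:
  fixes bound :: ereal and A :: real
  defines "\<Delta> \<equiv> real_of_ereal (min bound (ereal A))"
  assumes A: "0 < A" and q: "0 < q" "q \<le> 1" and below: "ereal (q * \<Delta>) < bound"
  shows "0 < \<Delta>"
proof (cases bound)
  case (real r)
  then have \<Delta>: "\<Delta> = min r A" by (simp add: \<Delta>_def min_def)
  show ?thesis
  proof (rule ccontr)
    assume "\<not> 0 < \<Delta>"
    with \<Delta> A have "\<Delta> = r" "r \<le> 0" by auto
    with q have "r \<le> q * \<Delta>" by (simp add: mult_le_cancel_right1)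
    with below real show False by simp
  qed
qed (use below A \<Delta>_def in auto)

lemma capped_step_eq_cap:
  fixes bound :: ereal and A :: real
  defines "\<Delta> \<equiv> real_of_ereal (min bound (ereal A))"
  assumes below: "ereal \<Delta> < bound"
  shows "\<Delta> = A"
  using below unfolding \<Delta>_def by (cases bound) (auto simp: min_def split: if_splits)

lemma backtracking_accepted_step_lower_bound:
  fixes f :: "'a::real_inner \<Rightarrow> real" and bound :: ereal and A :: real
  defines "\<Delta> \<equiv> real_of_ereal (min bound (ereal A))"
  assumes grad: "\<And>y. (f has_derivative (\<lambda>h. grad y \<bullet> h)) (at y)"
    and lip: "\<And>s t. \<bar>grad (z + s *\<^sub>R v) \<bullet> v - grad (z + t *\<^sub>R v) \<bullet> v\<bar> \<le> L * \<bar>s - t\<bar>"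
    and slope: "grad z \<bullet> v = - G" and G: "G \<noteq> 0"
    and \<delta>: "0 < \<delta>" "\<delta> \<le> 1" and A: "0 < A"
    and rejected: "\<And>m'. m' < m \<Longrightarrow> \<not> f (z + (\<delta> ^ m' * \<Delta>) *\<^sub>R (G *\<^sub>R v))
                     \<le> f z + \<gamma> * (\<delta> ^ m' * \<Delta>) * (grad z \<bullet> (G *\<^sub>R v))"
    and below: "ereal (\<delta> ^ m * \<Delta>) < bound"
  shows "0 < \<delta> ^ m * \<Delta> \<and> (A \<le> \<delta> ^ m * \<Delta> \<or> 2 * \<delta> * (1 - \<gamma>) < L * (\<delta> ^ m * \<Delta>))"
proof -
  have "0 < \<Delta>"
    unfolding \<Delta>_def by (rule capped_step_pos[OF A]) (use \<delta> below in \<open>simp_all add: \<Delta>_def power_le_one\<close>)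
  then have "0 < \<delta> ^ m * \<Delta>"
    using \<delta> by simp
  moreover have "A \<le> \<delta> ^ m * \<Delta>" if "m = 0"
  proof -
    have "\<Delta> = A"
      unfolding \<Delta>_def by (rule capped_step_eq_cap) (use below that in \<open>simp add: \<Delta>_def\<close>)
    with that show ?thesis by simp
  qed
  moreover have "m = 0 \<or> 2 * \<delta> * (1 - \<gamma>) < L * (\<delta> ^ m * \<Delta>)"
    by (rule backtracking_step_lower_bound[OF grad lip slope G \<delta>(1) \<open>0 < \<Delta>\<close> rejected])
  ultimately show ?thesis
    by blast
qed

lemma le_max_div_mult_abs:
  fixes a c L Lmax \<alpha> G w :: real
  assumes a: "0 < a" and c: "0 < c" and \<alpha>: "0 < \<alpha>" and L: "L \<le> Lmax"
    and long_step: "a \<le> \<alpha> \<or> c < L * \<alpha>"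
  shows "G * w \<le> max (1 / a) (Lmax / c) * \<bar>\<alpha> * G\<bar> * \<bar>w\<bar>"
proof -
  let ?C = "max (1 / a) (Lmax / c)"
  have one_le: "1 \<le> ?C * \<alpha>"
    using long_step
  proof
    assume "a \<le> \<alpha>"
    then have "1 \<le> 1 / a * \<alpha>" using a by (simp add: field_simps)
    also have "\<dots> \<le> ?C * \<alpha>" using \<alpha> by (intro mult_right_mono) auto
    finally show ?thesis .
  next
    assume "c < L * \<alpha>"
    also have "\<dots> \<le> Lmax * \<alpha>" using L \<alpha> by simp
    finally have "1 \<le> Lmax / c * \<alpha>" using c by (simp add: field_simps)
    also have "\<dots> \<le> ?C * \<alpha>" using \<alpha> by (intro mult_right_mono) auto
    finally show ?thesis .
  qed
  have "G * w \<le> \<bar>G\<bar> * \<bar>w\<bar>"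
    by (metis abs_ge_self abs_mult)
  also have "\<dots> \<le> (?C * \<alpha>) * (\<bar>G\<bar> * \<bar>w\<bar>)"
    using mult_right_mono[OF one_le, of "\<bar>G\<bar> * \<bar>w\<bar>"] by simp
  also have "\<dots> = ?C * \<bar>\<alpha> * G\<bar> * \<bar>w\<bar>"
    using \<alpha> by (simp add: abs_mult)
  finally show ?thesis .
qed

theorem lemma5:
  fixes f :: "real^'n \<Rightarrow> real" and grad :: "real^'n \<Rightarrow> real^'n"
    and l u :: "'n \<Rightarrow> ereal" and b :: real
    and Lc :: "'n \<Rightarrow> 'n \<Rightarrow> real"
    and \<tau> \<gamma> \<delta> Al Au :: real
    and x :: "nat \<Rightarrow> real^'n"
    and z :: "nat \<Rightarrow> nat \<Rightarrow> real^'n"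
    and j :: "nat \<Rightarrow> 'n"
    and p :: "nat \<Rightarrow> nat \<Rightarrow> 'n"
    and A :: "nat \<Rightarrow> nat \<Rightarrow> real"
    and \<alpha> :: "nat \<Rightarrow> nat \<Rightarrow> real"
    and xs :: "real^'n" and k i :: nat
  defines "n \<equiv> CARD('n)"
  defines "Lmax \<equiv> Max (case_prod Lc ` UNIV)"
  defines "g \<equiv> \<lambda>k i. grad (z k i) $ j k - grad (z k i) $ p k i"
  defines "d \<equiv> \<lambda>k i. g k i *\<^sub>R (axis (p k i) 1 - axis (j k) 1)"
  defines "\<Delta> \<equiv> \<lambda>k i. real_of_ereal (min (alpha_bar l u (z k i) (p k i) (j k) (g k i)) (ereal (A k i)))"
  defines "armijo \<equiv> \<lambda>k i a. f (z k i + a *\<^sub>R d k i) \<le> f (z k i) + \<gamma> * a * (grad (z k i) \<bullet> d k i)"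
  \<comment> \<open>problem data\<close>
  assumes n_ge: "CARD('n) \<ge> 2"
    and l_fin: "\<forall>i. l i \<noteq> \<infinity>" and u_fin: "\<forall>i. u i \<noteq> -\<infinity>" and lu: "\<forall>i. l i < u i"
    and grad: "\<forall>y. (f has_derivative (\<lambda>h. grad y \<bullet> h)) (at y)"
    and grad_lip: "\<exists>K. \<forall>y y'. dist (grad y) (grad y') \<le> K * dist y y'"
    and Lc_pos: "\<forall>i i'. i \<noteq> i' \<longrightarrow> Lc i i' > 0" and Lc_diag: "\<forall>i. Lc i i = 0"
    and Lc_lip: "\<forall>i i' y s t. i \<noteq> i' \<longrightarrow>
        \<bar>grad (y + s *\<^sub>R (axis i 1 - axis i' 1)) \<bullet> (axis i 1 - axis i' 1)
         - grad (y + t *\<^sub>R (axis i 1 - axis i' 1)) \<bullet> (axis i 1 - axis i' 1)\<bar> \<le> Lc i i' * \<bar>s - t\<bar>"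
  \<comment> \<open>algorithm parameters\<close>
    and \<tau>: "0 < \<tau>" "\<tau> \<le> 1" and \<gamma>: "0 < \<gamma>" "\<gamma> < 1" and \<delta>: "0 < \<delta>" "\<delta> < 1"
    and Al: "0 < Al" "Al \<le> Au"
  \<comment> \<open>standing assumptions\<close>
    and x0: "feasible l u b (x 0)"
    and L0: "compact {y. feasible l u b y \<and> f y \<le> f (x 0)}" "{y. feasible l u b y \<and> f y \<le> f (x 0)} \<noteq> {}"
    and L0_int: "\<forall>y. feasible l u b y \<and> f y \<le> f (x 0) \<longrightarrow> (\<exists>h. l h < ereal (y $ h) \<and> ereal (y $ h) < u h)"
  \<comment> \<open>the iterates of AC2CD\<close>
    and j_choice: "\<forall>k. Dh l u (x k) (j k) \<ge> ereal \<tau> * Max (range (Dh l u (x k)))"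
    and p_perm: "\<forall>k. bij_betw (p k) {1..n} UNIV"
    and z_start: "\<forall>k. z k 1 = x k"
    and A_range: "\<forall>k i. 1 \<le> i \<and> i \<le> n \<longrightarrow> Al \<le> A k i \<and> A k i \<le> Au"
    and linesearch: "\<forall>k i. 1 \<le> i \<and> i \<le> n \<longrightarrow>
        (\<exists>m::nat. \<alpha> k i = \<delta> ^ m * \<Delta> k i \<and> armijo k i (\<alpha> k i) \<and>
                  (\<forall>m'<m. \<not> armijo k i (\<delta> ^ m' * \<Delta> k i)))"
    and z_step: "\<forall>k i. 1 \<le> i \<and> i \<le> n \<longrightarrow> z k (Suc i) = z k i + \<alpha> k i *\<^sub>R d k i"
    and x_next: "\<forall>k. x (Suc k) = z k (n + 1)"
  \<comment> \<open>additional requirement on the A^{k,i}\<close>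
    and j_interior: "\<forall>k i. 1 \<le> i \<and> i \<le> n + 1 \<longrightarrow>
        l (j k) < ereal (z k i $ j k) \<and> ereal (z k i $ j k) < u (j k)"
  \<comment> \<open>claim\<close>
    and xs: "stationary l u b grad xs"
    and ki: "1 \<le> i" "i \<le> n"
  shows "g k i * (xs $ p k i - z k (Suc i) $ p k i)
         \<le> max (1 / Al) (Lmax / (2 * \<delta> * (1 - \<gamma>)))
            * \<bar>z k (Suc i) $ p k i - z k i $ p k i\<bar> * \<bar>xs $ p k i - z k (Suc i) $ p k i\<bar>"
proof -
  let ?P = "p k i" and ?J = "j k" and ?Z = "z k i" and ?Z' = "z k (Suc i)"
  show ?thesis
  proof (cases "g k i * (xs $ ?P - ?Z' $ ?P) \<le> 0")
    case True
    have "0 < max (1 / Al) (Lmax / (2 * \<delta> * (1 - \<gamma>)))"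
      using Al by (simp add: less_max_iff_disj)
    then have "0 \<le> max (1 / Al) (Lmax / (2 * \<delta> * (1 - \<gamma>)))
        * \<bar>?Z' $ ?P - ?Z $ ?P\<bar> * \<bar>xs $ ?P - ?Z' $ ?P\<bar>"
      by simp
    with True show ?thesis
      by linarith
  next
    case False
    then have G: "g k i \<noteq> 0" by auto
    then have PJ: "?P \<noteq> ?J" by (auto simp: g_def)
    obtain m where \<alpha>: "\<alpha> k i = \<delta> ^ m * \<Delta> k i"
      and rejected: "\<forall>m'<m. \<not> armijo k i (\<delta> ^ m' * \<Delta> k i)"
      using linesearch ki by blast
    define v :: "real^'n" where "v = axis ?P 1 - axis ?J 1"
    have step: "?Z' = ?Z + (\<alpha> k i * g k i) *\<^sub>R v"
      using z_step ki by (simp add: d_def v_def)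
    have below: "ereal (\<alpha> k i) < alpha_bar l u ?Z ?P ?J (g k i)"
      by (rule alpha_bar_gt_step[OF PJ G step[unfolded v_def]])
        (use j_interior ki xs False in \<open>auto simp: stationary_def feasible_def\<close>)
    have lip: "\<bar>grad (?Z + s *\<^sub>R v) \<bullet> v - grad (?Z + t *\<^sub>R v) \<bullet> v\<bar> \<le> Lc ?P ?J * \<bar>s - t\<bar>" for s t
      unfolding v_def by (rule Lc_lip[rule_format, OF PJ])
    have slope: "grad ?Z \<bullet> v = - g k i"
      by (simp add: v_def g_def inner_diff_right inner_axis)
    have rejected': "\<not> f (?Z + (\<delta> ^ m' * \<Delta> k i) *\<^sub>R (g k i *\<^sub>R v))
        \<le> f ?Z + \<gamma> * (\<delta> ^ m' * \<Delta> k i) * (grad ?Z \<bullet> (g k i *\<^sub>R v))" if "m' < m" for m'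
      using rejected that unfolding armijo_def d_def v_def by blast
    have "Al \<le> A k i" using A_range ki by auto
    with Al have "0 < A k i" by linarith
    from backtracking_accepted_step_lower_bound[OF grad[rule_format] lip slope G \<delta>(1)
        less_imp_le[OF \<delta>(2)] this rejected'[unfolded \<Delta>_def] below[unfolded \<alpha> \<Delta>_def]]
    have accepted: "0 < \<alpha> k i" "A k i \<le> \<alpha> k i \<or> 2 * \<delta> * (1 - \<gamma>) < Lc ?P ?J * \<alpha> k i"
      unfolding \<alpha> \<Delta>_def by auto
    with \<open>Al \<le> A k i\<close> have "Al \<le> \<alpha> k i \<or> 2 * \<delta> * (1 - \<gamma>) < Lc ?P ?J * \<alpha> k i"
      by linarith
    moreover have "Lc ?P ?J \<le> Lmax"
      unfolding Lmax_def by (rule Max_ge) auto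
    moreover have "0 < 2 * \<delta> * (1 - \<gamma>)"
      using \<gamma> \<delta> by simp
    ultimately show ?thesis
      using le_max_div_mult_abs[OF Al(1) _ accepted(1), of _ "Lc ?P ?J" Lmax "g k i"] PJ
      by (simp add: step v_def axis_def)
  qed
qed

end
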